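(* Any $(M,d_s,d_x,\epsilon)$ code must satisfy \[\epsilon\ge\sup_{P_{\bar X|\bar Z\bar Y}}\ \sup_{\gamma\ge0}\Big\{\mathbb E\Big[\inf_{z\in\widehat{\mathcal S},\,y\in\widehat{\mathcal X}}\mathbb P\big[f_{\bar X|\bar Z\bar Y}(S,X,z,y)\ge\gamma\mid X\big]\Big]-\exp(-\gamma)\Big\},\] where $(S,X)\sim P_{SX}$, the first supremum is over conditional distributions $P_{\bar X|\bar Z\bar Y}:\widehat{\mathcal S}\times\widehat{\mathcal X}\to\mathcal X$ such that the Radon–Nikodym derivative of $P_{\bar X|\bar Z=z,\bar Y=y}$ with respect to $P_X$ at $x$ exists for every $z\in\widehat{\mathcal S}$, $y\in\widehat{\mathcal X}$ and $P_X$-a.e. $x$, and \[f_{\bar X|\bar Z\bar Y}(s,x,z,y)=\log\frac{\mathrm dP_{\bar X|\bar Z=z,\bar Y=y}}{\mathrm dP_X}(x)+\sup_{\lambda_s\ge0}\lambda_s(\mathsf d_s(s,z)-d_s)+\sup_{\lambda_x\ge0}\lambda_x(\mathsf d_x(x,y)-d_x)-\log M.\]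
   Context: Let $\mathcal S,\mathcal X,\widehat{\mathcal S},\widehat{\mathcal X}$ be finite sets, $P_{SX}$ a distribution on $\mathcal S\times\mathcal X$, and $\mathsf d_s:\mathcal S\times\widehat{\mathcal S}\to[0,\infty)$, $\mathsf d_x:\mathcal X\times\widehat{\mathcal X}\to[0,\infty)$ distortion measures; fix $d_s,d_x\ge0$. An $(M,d_s,d_x,\epsilon)$ code is a random encoder $P_{U|X}:\mathcal X\to\{1,\dots,M\}$ and a random decoder $P_{ZY|U}:\{1,\dots,M\}\to\widehat{\mathcal S}\times\widehat{\mathcal X}$ (so $S-X-U-(Z,Y)$) such that $\mathbb P[\mathsf d_s(S,Z)>d_s\text{ or }\mathsf d_x(X,Y)>d_x]\le\epsilon$. $\log$ and $\exp$ are to a common base. *)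

theory Defs
  imports "HOL-Probability.Probability"
begin

(* P      : joint distribution P_SX of (S,X)
   enc    : random encoder P_{U|X}, messages in {1..M}
   dec    : random decoder P_{ZY|U}
   The Markov chain S - X - U - (Z,Y) is built into the joint law below. *)

definition code_joint ::
  "('s \<times> 'x) pmf \<Rightarrow> ('x \<Rightarrow> nat pmf) \<Rightarrow> (nat \<Rightarrow> ('sh \<times> 'xh) pmf)
     \<Rightarrow> (('s \<times> 'x) \<times> ('sh \<times> 'xh)) pmf" where
  "code_joint P enc dec =
     bind_pmf P (\<lambda>sx. bind_pmf (enc (snd sx)) (\<lambda>u. map_pmf (\<lambda>zy. (sx, zy)) (dec u)))"

definition is_code ::
  "('s \<times> 'x) pmf \<Rightarrow> ('s \<Rightarrow> 'sh \<Rightarrow> real) \<Rightarrow> ('x \<Rightarrow> 'xh \<Rightarrow> real)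
     \<Rightarrow> nat \<Rightarrow> real \<Rightarrow> real \<Rightarrow> real
     \<Rightarrow> ('x \<Rightarrow> nat pmf) \<Rightarrow> (nat \<Rightarrow> ('sh \<times> 'xh) pmf) \<Rightarrow> bool" where
  "is_code P dS dX M ds dx \<epsilon> enc dec \<longleftrightarrow>
     (\<forall>x. set_pmf (enc x) \<subseteq> {1..M}) \<and>
     measure_pmf.prob (code_joint P enc dec)
        {((s, x), (z, y)). dS s z > ds \<or> dX x y > dx} \<le> \<epsilon>"

definition ereal_log :: "real \<Rightarrow> real \<Rightarrow> ereal" where
  "ereal_log b r = (if r = 0 then -\<infinity> else ereal (log b r))"

(* f_{Xbar|Zbar Ybar}(s,x,z,y); logarithm to base b; values in extended reals
   (the suprema over lambda are +infinity when the distortion is exceeded). *)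
definition f_info ::
  "real \<Rightarrow> ('s \<times> 'x) pmf \<Rightarrow> ('sh \<Rightarrow> 'xh \<Rightarrow> 'x pmf) \<Rightarrow> ('s \<Rightarrow> 'sh \<Rightarrow> real)
     \<Rightarrow> ('x \<Rightarrow> 'xh \<Rightarrow> real) \<Rightarrow> nat \<Rightarrow> real \<Rightarrow> real
     \<Rightarrow> 's \<Rightarrow> 'x \<Rightarrow> 'sh \<Rightarrow> 'xh \<Rightarrow> ereal" where
  "f_info b P Q dS dX M ds dx s x z y =
     ereal_log b (enn2real (RN_deriv (measure_pmf (map_pmf snd P)) (measure_pmf (Q z y)) x))
     + (SUP l\<in>{0::real..}. ereal (l * (dS s z - ds)))
     + (SUP l\<in>{0::real..}. ereal (l * (dX x y - dx)))
     - ereal (log b (real M))"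

definition bound_term ::
  "real \<Rightarrow> ('s \<times> 'x) pmf \<Rightarrow> ('sh \<Rightarrow> 'xh \<Rightarrow> 'x pmf) \<Rightarrow> ('s \<Rightarrow> 'sh \<Rightarrow> real)
     \<Rightarrow> ('x \<Rightarrow> 'xh \<Rightarrow> real) \<Rightarrow> nat \<Rightarrow> real \<Rightarrow> real \<Rightarrow> real \<Rightarrow> real" where
  "bound_term b P Q dS dX M ds dx \<gamma> =
     measure_pmf.expectation (map_pmf snd P)
       (\<lambda>x. INF zy\<in>(UNIV :: ('sh \<times> 'xh) set).
              measure_pmf.prob (cond_pmf P {sx. snd sx = x})
                {sx. ereal \<gamma> \<le> f_info b P Q dS dX M ds dx (fst sx) (snd sx) (fst zy) (snd zy)})
     - b powr (- \<gamma>)"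

end

theory Submission
  imports Defs
begin

(* Averaging the infimum over (z, y) against the code's end-to-end channel
   P_{ZY|X} bounds the expectation by P[f(S, X, Z, Y) >= gamma]. Off the distortion-violation event
   both suprema over lambda vanish, so there f >= gamma forces P_X(x) <= b^-gamma / M * Q_{zy}(x).
   As P_{ZY|X=x} is dominated pointwise by the sum of the M decoder laws P_{ZY|U=u}, this event has
   probability at most b^-gamma / M * M = b^-gamma. Hence the bound term is at most the error
   probability, which is at most epsilon. *)

lemma measure_pmf_eq_sum_indicator:
  fixes J :: "'a::finite pmf"
  shows "measure_pmf.prob J A = (\<Sum>z\<in>UNIV. pmf J z * of_bool (z \<in> A))"
  by (simp add: measure_measure_pmf_finite sum.inter_filter[symmetric] Collect_mem_eq)

lemma measure_pmf_eq_sum_pairs: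
  fixes J :: "('a::finite \<times> 'b::finite) pmf"
  shows "measure_pmf.prob J A = (\<Sum>a\<in>UNIV. \<Sum>b\<in>UNIV. pmf J (a, b) * of_bool ((a, b) \<in> A))"
  unfolding measure_pmf_eq_sum_indicator sum.cartesian_product UNIV_Times_UNIV
  by (simp only: split_def prod.collapse)

lemma pmf_bind_Pair:
  "pmf (bind_pmf p (\<lambda>x. map_pmf (Pair x) (K x))) (x, y) = pmf p x * pmf (K x) y"
proof -
  have "pmf (map_pmf (Pair x') (K x')) (x, y) = indicator {x} x' * pmf (K x) y" for x'
    by (cases "x' = x") (auto simp: pmf_map_inj' inj_on_def pmf_eq_0_set_pmf)
  then show ?thesis
    by (simp add: pmf_bind measure_pmf_single)
qed

lemma prob_cond_pmf_snd:
  fixes P :: "('s \<times> 'x) pmf"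
  shows "pmf (map_pmf snd P) x * measure_pmf.prob (cond_pmf P {sx. snd sx = x}) B
           = measure_pmf.prob P (B \<inter> {sx. snd sx = x})"
proof (cases "x \<in> set_pmf (map_pmf snd P)")
  case True
  then have ne: "set_pmf P \<inter> {sx. snd sx = x} \<noteq> {}" by auto
  have px: "pmf (map_pmf snd P) x = measure_pmf.prob P {sx. snd sx = x}"
    by (simp add: pmf_map vimage_def)
  show ?thesis
    unfolding px using emeasure_measure_pmf_not_zero[OF ne] measure_measure_pmf_not_zero[OF ne]
    by (simp add: cond_pmf.rep_eq[OF ne] measure_uniform_measure Int_commute)
next
  case False
  then have "measure_pmf.prob P (B \<inter> {sx. snd sx = x}) = 0"
    by (intro measure_pmf_zero_iff[THEN iffD2]) force
  with False show ?thesis by (simp add: pmf_eq_0_set_pmf)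
qed

lemma RN_deriv_measure_pmf:
  assumes ac: "absolutely_continuous (measure_pmf p) (measure_pmf q)"
    and x: "x \<in> set_pmf p"
  shows "enn2real (RN_deriv (measure_pmf p) (measure_pmf q) x) = pmf q x / pmf p x"
proof -
  define f where "f y = ennreal (pmf q y / pmf p y)" for y
  have q_null: "pmf q y = 0" if "pmf p y = 0" for y
  proof -
    have "{y} \<in> null_sets (measure_pmf p)"
      using that by (simp add: null_sets_def measure_pmf.emeasure_eq_measure measure_pmf_single)
    then have "{y} \<in> null_sets (measure_pmf q)"
      using ac unfolding absolutely_continuous_def by blast
    then show ?thesis
      by (simp add: null_sets_def measure_pmf.emeasure_eq_measure measure_pmf_single)
  qed
  have "density (measure_pmf p) f = density (count_space UNIV) (\<lambda>y. ennreal (pmf p y) * f y)"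
    unfolding measure_pmf_eq_density[of p] by (subst density_density_eq) auto
  also have "(\<lambda>y. ennreal (pmf p y) * f y) = (\<lambda>y. ennreal (pmf q y))"
  proof
    fix y
    show "ennreal (pmf p y) * f y = ennreal (pmf q y)"
      using q_null[of y] by (cases "pmf p y = 0") (auto simp: f_def ennreal_mult'[symmetric])
  qed
  also have "density (count_space UNIV) \<dots> = measure_pmf q"
    by (rule measure_pmf_eq_density[symmetric])
  finally have "AE y in measure_pmf p. f y = RN_deriv (measure_pmf p) (measure_pmf q) y"
    by (intro RN_deriv_unique_sigma_finite) (auto intro: measure_pmf.sigma_finite_measure_axioms)
  with x have "f x = RN_deriv (measure_pmf p) (measure_pmf q) x"
    by (simp add: AE_measure_pmf_iff)
  then show ?thesis
    by (metis f_def enn2real_ennreal divide_nonneg_nonneg pmf_nonneg)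
qed

lemma SUP_nonneg_mult_nonpos:
  fixes a :: real
  assumes "a \<le> 0"
  shows "(SUP l\<in>{0::real..}. ereal (l * a)) = 0"
proof (rule antisym)
  show "(SUP l\<in>{0..}. ereal (l * a)) \<le> 0"
    using assms by (intro SUP_least) (auto simp: mult_nonneg_nonpos)
  show "0 \<le> (SUP l\<in>{0..}. ereal (l * a))"
    using SUP_upper[of 0 "{0::real..}" "\<lambda>l. ereal (l * a)"] by (simp add: zero_ereal_def)
qed

lemma expectation_INF_cond_prob_le:
  fixes P :: "('s::finite \<times> 'x::finite) pmf" and W :: "'x \<Rightarrow> 'y::finite pmf"
    and A :: "'y \<Rightarrow> ('s \<times> 'x) set"
  shows "measure_pmf.expectation (map_pmf snd P)
           (\<lambda>x. INF y. measure_pmf.prob (cond_pmf P {sx. snd sx = x}) (A y))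
         \<le> measure_pmf.prob (bind_pmf P (\<lambda>sx. map_pmf (Pair sx) (W (snd sx)))) {(sx, y). sx \<in> A y}"
proof -
  define p where "p = map_pmf snd P"
  define g where "g x y = measure_pmf.prob (cond_pmf P {sx. snd sx = x}) (A y)" for x y
  have INF_le: "(INF y. g x y) \<le> (\<Sum>y\<in>UNIV. pmf (W x) y * g x y)" for x
  proof -
    have "(INF y. g x y) = (\<Sum>y\<in>UNIV. pmf (W x) y * (INF y. g x y))"
      by (simp add: sum_distrib_right[symmetric] sum_pmf_eq_1)
    also have "\<dots> \<le> (\<Sum>y\<in>UNIV. pmf (W x) y * g x y)"
      by (intro sum_mono mult_left_mono cINF_lower bdd_belowI[of _ 0]) (auto simp: g_def)
    finally show ?thesis .
  qed
  have weighted_g: "pmf p x * g x y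
      = (\<Sum>sx\<in>UNIV. of_bool (snd sx = x) * (pmf P sx * of_bool (sx \<in> A y)))" for x y
    unfolding p_def g_def prob_cond_pmf_snd unfolding measure_pmf_eq_sum_indicator
    by (simp only: of_bool_conj Int_iff mem_Collect_eq mult_ac)
  have "measure_pmf.expectation p (\<lambda>x. INF y. g x y) = (\<Sum>x\<in>UNIV. pmf p x * (INF y. g x y))"
    by (subst integral_measure_pmf[of UNIV]) (auto simp: mult.commute)
  also have "\<dots> \<le> (\<Sum>x\<in>UNIV. pmf p x * (\<Sum>y\<in>UNIV. pmf (W x) y * g x y))"
    by (intro sum_mono mult_left_mono INF_le) simp
  also have "\<dots> = (\<Sum>x\<in>UNIV. \<Sum>y\<in>UNIV. pmf (W x) y * (pmf p x * g x y))"
    by (simp add: sum_distrib_left mult_ac)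
  also have "\<dots> = (\<Sum>x\<in>UNIV. \<Sum>y\<in>UNIV. \<Sum>sx\<in>UNIV.
                      pmf (W x) y * (of_bool (snd sx = x) * (pmf P sx * of_bool (sx \<in> A y))))"
    by (simp only: weighted_g sum_distrib_left)
  also have "\<dots> = (\<Sum>sx\<in>UNIV. \<Sum>y\<in>UNIV. pmf P sx * pmf (W (snd sx)) y * of_bool (sx \<in> A y))"
    by (subst sum.swap, subst (2) sum.swap) (simp add: of_bool_def if_distrib if_distribR sum.If_cases mult_ac)
  also have "\<dots> = measure_pmf.prob (bind_pmf P (\<lambda>sx. map_pmf (Pair sx) (W (snd sx)))) {(sx, y). sx \<in> A y}"
    by (simp add: measure_pmf_eq_sum_pairs pmf_bind_Pair)
  finally show ?thesis unfolding p_def g_def .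
qed

lemma prob_likelihood_ratio_le:
  fixes p :: "'x::finite pmf" and W :: "'x \<Rightarrow> 'y::finite pmf" and Q :: "'y \<Rightarrow> 'x pmf"
  assumes W_le: "\<And>x y. pmf (W x) y \<le> V y" and c: "c \<ge> 0"
  shows "measure_pmf.prob (bind_pmf p (\<lambda>x. map_pmf (Pair x) (W x)))
           {(x, y). pmf p x \<le> c * pmf (Q y) x} \<le> c * (\<Sum>y\<in>UNIV. V y)"
proof -
  have "measure_pmf.prob (bind_pmf p (\<lambda>x. map_pmf (Pair x) (W x))) {(x, y). pmf p x \<le> c * pmf (Q y) x}
      = (\<Sum>x\<in>UNIV. \<Sum>y\<in>UNIV. pmf p x * pmf (W x) y * of_bool (pmf p x \<le> c * pmf (Q y) x))"
    by (simp add: measure_pmf_eq_sum_pairs pmf_bind_Pair)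
  also have "\<dots> \<le> (\<Sum>x\<in>UNIV. \<Sum>y\<in>UNIV. c * pmf (Q y) x * V y)"
  proof (intro sum_mono)
    fix x y
    have "0 \<le> V y" using W_le[of x y] pmf_nonneg[of "W x" y] by linarith
    then show "pmf p x * pmf (W x) y * of_bool (pmf p x \<le> c * pmf (Q y) x) \<le> c * pmf (Q y) x * V y"
      using W_le[of x y] c by (auto intro: mult_mono)
  qed
  also have "\<dots> = c * (\<Sum>y\<in>UNIV. V y)"
    by (subst sum.swap) (simp add: sum_distrib_left[symmetric] sum_distrib_right[symmetric] sum_pmf_eq_1)
  finally show ?thesis .
qed

definition code_channel :: "('x \<Rightarrow> nat pmf) \<Rightarrow> (nat \<Rightarrow> 'y pmf) \<Rightarrow> 'x \<Rightarrow> 'y pmf" where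
  "code_channel enc dec x = bind_pmf (enc x) dec"

lemma code_joint_eq_bind_code_channel:
  "code_joint P enc dec = bind_pmf P (\<lambda>sx. map_pmf (Pair sx) (code_channel enc dec (snd sx)))"
  by (simp add: code_joint_def code_channel_def map_bind_pmf)

lemma pmf_code_channel_le:
  assumes "set_pmf (enc x) \<subseteq> {1..M}"
  shows "pmf (code_channel enc dec x) y \<le> (\<Sum>u\<in>{1..M}. pmf (dec u) y)"
proof -
  have "pmf (code_channel enc dec x) y = (\<Sum>u\<in>{1..M}. pmf (enc x) u * pmf (dec u) y)"
    unfolding code_channel_def pmf_bind using assms
    by (subst integral_measure_pmf[of "{1..M}"]) auto
  also have "\<dots> \<le> (\<Sum>u\<in>{1..M}. pmf (dec u) y)"
    by (intro sum_mono mult_left_le_one_le) (auto simp: pmf_le_1)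
  finally show ?thesis .
qed

lemma f_info_ge_imp_pmf_le:
  fixes P :: "('s \<times> 'x) pmf" and Q :: "'sh \<Rightarrow> 'xh \<Rightarrow> 'x pmf" and M :: nat
  assumes b: "b > 1" and M: "M \<ge> 1"
    and ac: "absolutely_continuous (measure_pmf (map_pmf snd P)) (measure_pmf (Q z y))"
    and dS: "dS s z \<le> ds" and dX: "dX x y \<le> dx"
    and f: "ereal \<gamma> \<le> f_info b P Q dS dX M ds dx s x z y"
  shows "pmf (map_pmf snd P) x \<le> b powr (-\<gamma>) / M * pmf (Q z y) x"
proof (cases "x \<in> set_pmf (map_pmf snd P)")
  case False
  then have "pmf (map_pmf snd P) x = 0"
    by (simp add: pmf_eq_0_set_pmf)
  then show ?thesis
    by simp
next
  case True
  define p where "p = pmf (map_pmf snd P) x"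
  define q where "q = pmf (Q z y) x"
  have p: "p > 0"
    using True by (simp add: p_def pmf_positive)
  have "ereal \<gamma> \<le> ereal_log b (q / p) - ereal (log b M)"
    using f dS dX
    by (simp add: f_info_def RN_deriv_measure_pmf[OF ac True] SUP_nonneg_mult_nonpos p_def q_def)
  then have q: "q > 0" and "\<gamma> + log b M \<le> log b (q / p)"
    using p pmf_nonneg[of "Q z y" x] by (auto simp: q_def ereal_log_def split: if_splits)
  then have "b powr (\<gamma> + log b M) \<le> b powr (log b (q / p))"
    using b by (intro powr_mono) auto
  also have "\<dots> = q / p"
    using b p q by simp
  finally have "b powr (\<gamma> + log b M) \<le> q / p" .
  then have "p * (b powr \<gamma> * M) \<le> q"
    using b M p by (simp add: powr_add field_simps)
  then show ?thesis
    using b M unfolding p_def[symmetric] q_def[symmetric] by (simp add: powr_minus field_simps)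
qed

lemma prob_code_joint_likelihood_ratio_le:
  fixes P :: "('s::finite \<times> 'x::finite) pmf" and Q :: "'sh::finite \<Rightarrow> 'xh::finite \<Rightarrow> 'x pmf"
    and dec :: "nat \<Rightarrow> ('sh \<times> 'xh) pmf"
  assumes enc: "\<And>x. set_pmf (enc x) \<subseteq> {1..M}" and c: "c \<ge> 0"
  shows "measure_pmf.prob (code_joint P enc dec)
           {((s, x), (z, y)). pmf (map_pmf snd P) x \<le> c * pmf (Q z y) x} \<le> c * M"
proof -
  define p where "p = map_pmf snd P"
  define W where "W = code_channel enc dec"
  have "map_pmf (\<lambda>(sx, zy). (snd sx, zy)) (code_joint P enc dec)
      = bind_pmf p (\<lambda>x. map_pmf (Pair x) (W x))"
    by (simp add: code_joint_eq_bind_code_channel p_def W_def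
                  map_bind_pmf bind_map_pmf pmf.map_comp o_def)
  moreover have "{((s :: 's, x), (z, y)). pmf p x \<le> c * pmf (Q z y) x}
      = (\<lambda>(sx, zy). (snd sx, zy)) -` {(x, zy). pmf p x \<le> c * pmf (case_prod Q zy) x}"
    by auto
  ultimately have "measure_pmf.prob (code_joint P enc dec) {((s, x), (z, y)). pmf p x \<le> c * pmf (Q z y) x}
      = measure_pmf.prob (bind_pmf p (\<lambda>x. map_pmf (Pair x) (W x)))
          {(x, zy). pmf p x \<le> c * pmf (case_prod Q zy) x}"
    by (simp only: measure_map_pmf[symmetric])
  also have "\<dots> \<le> c * (\<Sum>zy\<in>UNIV. \<Sum>u\<in>{1..M}. pmf (dec u) zy)"
    unfolding W_def using c by (intro prob_likelihood_ratio_le pmf_code_channel_le enc)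
  also have "\<dots> = c * M"
    by (subst sum.swap) (simp add: sum_pmf_eq_1)
  finally show ?thesis unfolding p_def .
qed

lemma prob_code_joint_f_info_ge_le:
  fixes P :: "('s::finite \<times> 'x::finite) pmf" and Q :: "'sh::finite \<Rightarrow> 'xh::finite \<Rightarrow> 'x pmf"
    and dec :: "nat \<Rightarrow> ('sh \<times> 'xh) pmf"
  assumes b: "b > 1" and enc: "\<And>x. set_pmf (enc x) \<subseteq> {1..M}"
    and ac: "\<And>z y. absolutely_continuous (measure_pmf (map_pmf snd P)) (measure_pmf (Q z y))"
  shows "measure_pmf.prob (code_joint P enc dec)
           {((s, x), (z, y)). ereal \<gamma> \<le> f_info b P Q dS dX M ds dx s x z y}
         \<le> measure_pmf.prob (code_joint P enc dec) {((s, x), (z, y)). dS s z > ds \<or> dX x y > dx}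
           + b powr (-\<gamma>)"
proof -
  define J where "J = code_joint P enc dec"
  define Err where "Err = {((s, x), (z, y)). dS s z > ds \<or> dX x y > dx}"
  define Small :: "(('s \<times> 'x) \<times> 'sh \<times> 'xh) set"
    where "Small = {((s, x), (z, y)). pmf (map_pmf snd P) x \<le> b powr (-\<gamma>) / M * pmf (Q z y) x}"
  obtain u where "u \<in> set_pmf (enc undefined)"
    using set_pmf_not_empty[of "enc undefined"] by blast
  with enc have M: "M \<ge> 1" by fastforce
  have "((s, x), (z, y)) \<in> Small"
    if "ereal \<gamma> \<le> f_info b P Q dS dX M ds dx s x z y" and "((s, x), (z, y)) \<notin> Err" for s x z y
  proof -
    have "pmf (map_pmf snd P) x \<le> b powr (-\<gamma>) / M * pmf (Q z y) x"
      using that by (intro f_info_ge_imp_pmf_le[where Q = Q and z = z and y = y, OF b M ac])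
        (auto simp: Err_def)
    then show ?thesis
      by (simp add: Small_def)
  qed
  then have "{((s, x), (z, y)). ereal \<gamma> \<le> f_info b P Q dS dX M ds dx s x z y} \<subseteq> Err \<union> Small"
    by auto
  then have "measure_pmf.prob J {((s, x), (z, y)). ereal \<gamma> \<le> f_info b P Q dS dX M ds dx s x z y}
      \<le> measure_pmf.prob J (Err \<union> Small)"
    by (rule measure_pmf.finite_measure_mono) simp
  also have "\<dots> \<le> measure_pmf.prob J Err + measure_pmf.prob J Small"
    by (rule measure_subadditive) (simp_all add: measure_pmf.emeasure_eq_measure)
  also have "measure_pmf.prob J Small \<le> b powr (-\<gamma>) / M * M"
    unfolding J_def Small_def by (intro prob_code_joint_likelihood_ratio_le enc) simp
  also have "b powr (-\<gamma>) / M * M = b powr (-\<gamma>)"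
    using M by simp
  finally show ?thesis
    unfolding J_def Err_def by simp
qed

lemma bound_term_le_error_prob:
  fixes P :: "('s::finite \<times> 'x::finite) pmf" and Q :: "'sh::finite \<Rightarrow> 'xh::finite \<Rightarrow> 'x pmf"
    and dec :: "nat \<Rightarrow> ('sh \<times> 'xh) pmf"
  assumes b: "b > 1" and enc: "\<And>x. set_pmf (enc x) \<subseteq> {1..M}"
    and ac: "\<And>z y. absolutely_continuous (measure_pmf (map_pmf snd P)) (measure_pmf (Q z y))"
  shows "bound_term b P Q dS dX M ds dx \<gamma>
           \<le> measure_pmf.prob (code_joint P enc dec) {((s, x), (z, y)). dS s z > ds \<or> dX x y > dx}"
proof -
  define A where "A zy = {sx. ereal \<gamma> \<le> f_info b P Q dS dX M ds dx (fst sx) (snd sx) (fst zy) (snd zy)}"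
    for zy
  have "measure_pmf.expectation (map_pmf snd P)
          (\<lambda>x. INF zy. measure_pmf.prob (cond_pmf P {sx. snd sx = x}) (A zy))
      \<le> measure_pmf.prob (code_joint P enc dec) {(sx, zy). sx \<in> A zy}"
    unfolding code_joint_eq_bind_code_channel by (rule expectation_INF_cond_prob_le)
  also have "{(sx, zy). sx \<in> A zy}
      = {((s, x), (z, y)). ereal \<gamma> \<le> f_info b P Q dS dX M ds dx s x z y}"
    by (auto simp: A_def)
  also have "measure_pmf.prob (code_joint P enc dec) \<dots>
      \<le> measure_pmf.prob (code_joint P enc dec) {((s, x), (z, y)). dS s z > ds \<or> dX x y > dx}
        + b powr (-\<gamma>)"
    by (rule prob_code_joint_f_info_ge_le[OF b enc ac])
  finally show ?thesis
    by (simp add: bound_term_def A_def)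
qed

theorem corollary1:
  fixes P :: "('s::finite \<times> 'x::finite) pmf"
    and dS :: "'s \<Rightarrow> 'sh::finite \<Rightarrow> real"
    and dX :: "'x \<Rightarrow> 'xh::finite \<Rightarrow> real"
    and M :: nat and ds dx \<epsilon> b :: real
    and enc :: "'x \<Rightarrow> nat pmf" and dec :: "nat \<Rightarrow> ('sh \<times> 'xh) pmf"
  assumes "b > 1"
    and "\<And>s z. dS s z \<ge> 0" and "\<And>x y. dX x y \<ge> 0"
    and "ds \<ge> 0" and "dx \<ge> 0"
    and "is_code P dS dX M ds dx \<epsilon> enc dec"
  shows "ereal \<epsilon> \<ge>
    (SUP Q\<in>{Q :: 'sh \<Rightarrow> 'xh \<Rightarrow> 'x pmf. \<forall>z y.
              absolutely_continuous (measure_pmf (map_pmf snd P)) (measure_pmf (Q z y))}.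
       SUP \<gamma>\<in>{0::real..}. ereal (bound_term b P Q dS dX M ds dx \<gamma>))"
proof -
  have enc: "\<And>x. set_pmf (enc x) \<subseteq> {1..M}"
    and err: "measure_pmf.prob (code_joint P enc dec)
                {((s, x), (z, y)). dS s z > ds \<or> dX x y > dx} \<le> \<epsilon>"
    using assms(6) unfolding is_code_def by auto
  show ?thesis
  proof (intro SUP_least)
    fix Q :: "'sh \<Rightarrow> 'xh \<Rightarrow> 'x pmf" and \<gamma> :: real
    assume "Q \<in> {Q. \<forall>z y. absolutely_continuous (measure_pmf (map_pmf snd P)) (measure_pmf (Q z y))}"
    then have "bound_term b P Q dS dX M ds dx \<gamma>
        \<le> measure_pmf.prob (code_joint P enc dec) {((s, x), (z, y)). dS s z > ds \<or> dX x y > dx}"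
      by (intro bound_term_le_error_prob[OF assms(1) enc]) blast
    with err show "ereal (bound_term b P Q dS dX M ds dx \<gamma>) \<le> ereal \<epsilon>"
      by simp
  qed
qed

end
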